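(* Let $d\geq 2$ be an integer. For integers $a \le b$ write $[[a,b]] = \{a,a+1,\ldots,b\}$. Let $(R_m)_{m \geq 0}$ be a sequence of boxes $R_m = [[0,x_{1,m}]] \times \cdots \times [[0,x_{d,m}]] \subset \mathbb{Z}^d$ with $R_0 = \{(0,\ldots,0)\}$ (i.e. $x_{k,0}=0$ for all $k$), such that for every $m \geq 1$ and every $k \in \{1,\ldots,d\}$ one has $x_{k,m} \geq x_{k,m-1}$, with strict inequality if and only if $k \equiv m \pmod d$. For $m \geq 1$ let $s(m) \in \{1,\ldots,d\}$ be the residue class of $m$ modulo $d$. A (complete) line in $R_m$ in the $s(m)$-direction is a set of the form $\{(i_1,\ldots,i_{s(m)-1}, j, i_{s(m)+1},\ldots,i_d) : j \in [[0,x_{s(m),m}]]\}$ with $i_r \in [[0,x_{r,m}]]$ fixed for $r \neq s(m)$. For each $m \geq 1$ let $A_m > 1$ and let $\mathcal{L}(m)$ be a set of complete lines in $R_m$ in the $s(m)$-direction whose cardinality is at least $(1 - 1/A_m)$ times the number of all complete lines in $R_m$ in the $s(m)$-direction. If $M_0 \in \mathbb{N}$ satisfies $\sum_{m=1}^{M_0} 1/A_m < 1$, then there exists a sequence of lines $L_m \in \mathcal{L}(m)$, $m \in \{1,\ldots,M_0\}$, such that $L_{m+1} \cap L_m \neq \emptyset$ for every $m \in \{1,\ldots,M_0-1\}$. *)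

theory Defs
  imports Complex_Main
begin

text \<open>Points of Z^d are represented as functions nat => int, with coordinates
  indexed by 1..d and value 0 outside 1..d.\<close>

definition box :: "nat \<Rightarrow> (nat \<Rightarrow> nat \<Rightarrow> int) \<Rightarrow> nat \<Rightarrow> (nat \<Rightarrow> int) set" where
  "box d x m = {p. (\<forall>k\<in>{1..d}. 0 \<le> p k \<and> p k \<le> x k m) \<and> (\<forall>k. k \<notin> {1..d} \<longrightarrow> p k = 0)}"

definition sdir :: "nat \<Rightarrow> nat \<Rightarrow> nat" where
  "sdir d m = (if m mod d = 0 then d else m mod d)"

definition line_through :: "nat \<Rightarrow> (nat \<Rightarrow> nat \<Rightarrow> int) \<Rightarrow> nat \<Rightarrow> (nat \<Rightarrow> int) \<Rightarrow> (nat \<Rightarrow> int) set" where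
  "line_through d x m p = {p(sdir d m := j) | j. j \<in> {0..x (sdir d m) m}}"

definition lines :: "nat \<Rightarrow> (nat \<Rightarrow> nat \<Rightarrow> int) \<Rightarrow> nat \<Rightarrow> (nat \<Rightarrow> int) set set" where
  "lines d x m = line_through d x m ` box d x m"

end

theory Submission
  imports Defs
begin

text \<open>
  Call a point of R(m) reached if it lies on L(m) for some chain of lines
  L(1) in \<L>(1), ..., L(m) in \<L>(m) with consecutive lines meeting. The lines of R(m+1) are
  its columns in direction s(m+1), and passing from R(m) to R(m+1) only lengthens these
  columns. A point of R(m+1) whose line lies in \<L>(m+1) is reached as soon as one point of
  its column in R(m) is. So an unreached point of R(m+1) either lies on a line outside
  \<L>(m+1), a proportion at most 1/A(m+1) of all points, or over a column that is entirely
  unreached in R(m); since all columns have the same length, the latter proportion is at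
  most that of the unreached points of R(m). By induction the unreached proportion of
  R(M0) is at most the sum of the 1/A(m), which is below 1, so some point is reached.
\<close>

lemma sdir_mem: "d \<ge> 1 \<Longrightarrow> sdir d m \<in> {1..d}"
  unfolding sdir_def using mod_less_divisor[of d m] by auto

lemma sdir_eq_iff_mod_eq:
  assumes "d \<ge> 1" "k \<in> {1..d}"
  shows "k = sdir d m \<longleftrightarrow> k mod d = m mod d"
proof (cases "k = d")
  case True
  have "m mod d < d" using assms by simp
  then show ?thesis using True by (simp add: sdir_def)
next
  case False
  then have "k mod d = k" using assms by simp
  then show ?thesis using False assms by (simp add: sdir_def)
qed

lemma finite_box: "finite (box d x m)"
proof (rule finite_subset)
  show "box d x m \<subseteq> {p. \<forall>k. (k \<in> {1..d} \<longrightarrow> p k \<in> (\<Union>i\<in>{1..d}. {0..x i m}))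
                          \<and> (k \<notin> {1..d} \<longrightarrow> p k = 0)}"
  proof (intro subsetI CollectI allI conjI impI)
    fix p k assume "p \<in> box d x m"
    then show "k \<in> {1..d} \<Longrightarrow> p k \<in> (\<Union>i\<in>{1..d}. {0..x i m})"
      and "k \<notin> {1..d} \<Longrightarrow> p k = 0"
      unfolding box_def by (auto intro!: bexI[of _ k])
  qed
qed (intro finite_set_of_finite_funs; simp)

lemma box_mono: "\<forall>k\<in>{1..d}. x k m \<le> x k m' \<Longrightarrow> box d x m \<subseteq> box d x m'"
  unfolding box_def by (auto dest: order_trans)

text \<open>The columns of a box in direction s are the fibres of the projection p \<mapsto> p(s := 0).\<close>

lemma mem_box_iff_proj:
  assumes "s \<in> {1..d}"
  shows "p \<in> box d x m \<longleftrightarrow> p(s := 0) \<in> box d x m \<and> p s \<in> {0..x s m}"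
proof
  assume p: "p \<in> box d x m"
  then have "0 \<le> x s m" using assms unfolding box_def by fastforce
  with p show "p(s := 0) \<in> box d x m \<and> p s \<in> {0..x s m}"
    using assms unfolding box_def by auto
next
  assume "p(s := 0) \<in> box d x m \<and> p s \<in> {0..x s m}"
  then show "p \<in> box d x m"
    using assms unfolding box_def by (auto split: if_splits)
qed

lemma proj_box_eq:
  assumes "s \<in> {1..d}"
  shows "(\<lambda>p. p(s := 0)) ` box d x m = {q \<in> box d x m. q s = 0}"
proof (intro equalityI subsetI)
  fix q assume "q \<in> {q \<in> box d x m. q s = 0}"
  then have "q = q(s := 0)" "q \<in> box d x m" by auto
  then show "q \<in> (\<lambda>p. p(s := 0)) ` box d x m" by blast
next
  fix q assume "q \<in> (\<lambda>p. p(s := 0)) ` box d x m"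
  then obtain p where "p \<in> box d x m" "q = p(s := 0)" by blast
  then show "q \<in> {q \<in> box d x m. q s = 0}" using mem_box_iff_proj[OF assms, of p] by simp
qed

lemma proj_box_eq_if_same_off:
  assumes s: "s \<in> {1..d}" and same: "\<forall>k\<in>{1..d}. k \<noteq> s \<longrightarrow> x k m' = x k m"
    and "0 \<le> x s m" "0 \<le> x s m'"
  shows "(\<lambda>p. p(s := 0)) ` box d x m' = (\<lambda>p. p(s := 0)) ` box d x m"
proof -
  have "q \<in> box d x m' \<longleftrightarrow> q \<in> box d x m" if "q s = 0" for q
  proof -
    have "q k \<le> x k m' \<longleftrightarrow> q k \<le> x k m" if "k \<in> {1..d}" "0 \<le> q k" for k
      using assms \<open>q s = 0\<close> that by (cases "k = s") auto
    then show ?thesis unfolding box_def by blast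
  qed
  then show ?thesis unfolding proj_box_eq[OF s] by blast
qed

lemma card_box_proj_vimage:
  assumes s: "s \<in> {1..d}"
  shows "card {p \<in> box d x m. p(s := 0) \<in> T}
       = card (T \<inter> (\<lambda>p. p(s := 0)) ` box d x m) * nat (x s m + 1)"
proof -
  have "bij_betw (\<lambda>p. (p(s := 0), p s)) {p \<in> box d x m. p(s := 0) \<in> T}
          ((T \<inter> (\<lambda>p. p(s := 0)) ` box d x m) \<times> {0..x s m})"
  proof (rule bij_betw_byWitness[where f' = "\<lambda>(q, j). q(s := j)"])
    show "(\<lambda>p. (p(s := 0), p s)) ` {p \<in> box d x m. p(s := 0) \<in> T}
        \<subseteq> (T \<inter> (\<lambda>p. p(s := 0)) ` box d x m) \<times> {0..x s m}"
      using mem_box_iff_proj[OF s] by blast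
    show "(\<lambda>(q, j). q(s := j)) ` ((T \<inter> (\<lambda>p. p(s := 0)) ` box d x m) \<times> {0..x s m})
        \<subseteq> {p \<in> box d x m. p(s := 0) \<in> T}"
    proof
      fix r assume "r \<in> (\<lambda>(q, j). q(s := j)) ` ((T \<inter> (\<lambda>p. p(s := 0)) ` box d x m) \<times> {0..x s m})"
      then obtain q j where q: "q \<in> T" "q \<in> (\<lambda>p. p(s := 0)) ` box d x m"
        and j: "j \<in> {0..x s m}" and r: "r = q(s := j)" by (auto simp del: fun_upd_apply)
      from q(2) have "q \<in> box d x m" "q s = 0" unfolding proj_box_eq[OF s] by auto
      with q(1) j show "r \<in> {p \<in> box d x m. p(s := 0) \<in> T}"
        using mem_box_iff_proj[OF s, of r] unfolding r by (simp add: fun_upd_idem)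
    qed
  qed (auto simp: proj_box_eq[OF s] fun_upd_idem)
  then show ?thesis
    by (simp add: bij_betw_same_card card_cartesian_product)
qed

lemma card_box:
  "s \<in> {1..d} \<Longrightarrow> card (box d x m) = card ((\<lambda>p. p(s := 0)) ` box d x m) * nat (x s m + 1)"
  using card_box_proj_vimage[of s d x m UNIV] by simp

lemma line_through_eq_fibre:
  assumes s: "sdir d m \<in> {1..d}" and p: "p \<in> box d x m"
  shows "line_through d x m p = {r \<in> box d x m. r(sdir d m := 0) = p(sdir d m := 0)}"
proof (intro equalityI subsetI)
  fix r assume "r \<in> line_through d x m p"
  then obtain j where j: "j \<in> {0..x (sdir d m) m}" and r: "r = p(sdir d m := j)"
    unfolding line_through_def by blast
  have "p(sdir d m := 0) \<in> box d x m" using p mem_box_iff_proj[OF s] by blast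
  then show "r \<in> {r \<in> box d x m. r(sdir d m := 0) = p(sdir d m := 0)}"
    using j mem_box_iff_proj[OF s, of r] unfolding r by simp
next
  fix r assume "r \<in> {r \<in> box d x m. r(sdir d m := 0) = p(sdir d m := 0)}"
  then have "r \<in> box d x m" and "r = p(sdir d m := r (sdir d m))"
    by (auto simp: fun_eq_iff) metis
  then show "r \<in> line_through d x m p"
    using mem_box_iff_proj[OF s, of r] unfolding line_through_def by blast
qed

lemma bij_betw_proj_box_lines:
  assumes s: "sdir d m \<in> {1..d}"
  shows "bij_betw (\<lambda>q. {r \<in> box d x m. r(sdir d m := 0) = q})
           ((\<lambda>p. p(sdir d m := 0)) ` box d x m) (lines d x m)"
  unfolding bij_betw_def
proof
  show "inj_on (\<lambda>q. {r \<in> box d x m. r(sdir d m := 0) = q}) ((\<lambda>p. p(sdir d m := 0)) ` box d x m)"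
    by (rule inj_onI) blast
  show "(\<lambda>q. {r \<in> box d x m. r(sdir d m := 0) = q}) ` (\<lambda>p. p(sdir d m := 0)) ` box d x m = lines d x m"
    unfolding lines_def image_image using line_through_eq_fibre[OF s] by (intro image_cong) auto
qed

lemma card_lines:
  assumes s: "sdir d m \<in> {1..d}"
  shows "card (box d x m) = card (lines d x m) * nat (x (sdir d m) m + 1)"
  using card_box[OF s, of x m] bij_betw_same_card[OF bij_betw_proj_box_lines[OF s, of x]] by simp

lemma card_bad_lines:
  assumes s: "sdir d m \<in> {1..d}"
  shows "card {p \<in> box d x m. line_through d x m p \<notin> \<L>}
       = card (lines d x m - \<L>) * nat (x (sdir d m) m + 1)"
proof -
  define F where "F q = {r \<in> box d x m. r(sdir d m := 0) = q}" for q
  define B where "B = (\<lambda>p. p(sdir d m := 0)) ` box d x m"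
  define T where "T = {q. F q \<notin> \<L>}"
  have bij: "bij_betw F B (lines d x m)"
    unfolding F_def B_def by (rule bij_betw_proj_box_lines[OF s])
  have "F ` (T \<inter> B) = F ` B - \<L>"
    unfolding T_def by blast
  also have "F ` B = lines d x m"
    using bij by (simp add: bij_betw_def)
  finally have "card (T \<inter> B) = card (lines d x m - \<L>)"
    by (intro bij_betw_same_card[OF bij_betw_subset[OF bij]]) auto
  moreover have "line_through d x m p = F (p(sdir d m := 0))" if "p \<in> box d x m" for p
    using line_through_eq_fibre[OF s that] by (simp add: F_def)
  then have "{p \<in> box d x m. line_through d x m p \<notin> \<L>} = {p \<in> box d x m. p(sdir d m := 0) \<in> T}"
    unfolding T_def by auto
  ultimately show ?thesis
    using card_box_proj_vimage[OF s, of x m T] by (simp add: B_def)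
qed

lemma card_bad_lines_le:
  fixes \<L> :: "(nat \<Rightarrow> int) set set" and a :: real
  assumes s: "sdir d m \<in> {1..d}" and sub: "\<L> \<subseteq> lines d x m"
    and card_\<L>: "(1 - 1 / a) * real (card (lines d x m)) \<le> real (card \<L>)"
  shows "real (card {p \<in> box d x m. line_through d x m p \<notin> \<L>}) \<le> real (card (box d x m)) / a"
proof -
  define n where "n = real (nat (x (sdir d m) m + 1))"
  have fin: "finite (lines d x m)"
    unfolding lines_def by (simp add: finite_box)
  have "real (card (lines d x m - \<L>)) = real (card (lines d x m)) - real (card \<L>)"
    using card_mono[OF fin sub] card_Diff_subset[OF finite_subset[OF sub fin] sub]
    by (simp add: of_nat_diff)
  also have "\<dots> \<le> real (card (lines d x m)) / a"
    using card_\<L> by (simp add: left_diff_distrib)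
  finally have "real (card (lines d x m - \<L>)) * n \<le> real (card (lines d x m)) / a * n"
    by (rule mult_right_mono) (simp add: n_def)
  then show ?thesis
    using card_bad_lines[OF s, of x \<L>] card_lines[OF s, of x] by (simp add: n_def)
qed

definition linked_chain :: "(nat \<Rightarrow> 'a set set) \<Rightarrow> nat \<Rightarrow> (nat \<Rightarrow> 'a set) \<Rightarrow> bool" where
  "linked_chain \<L> m L \<longleftrightarrow> (\<forall>i\<in>{1..m}. L i \<in> \<L> i) \<and> (\<forall>i\<in>{1..m - 1}. L (i + 1) \<inter> L i \<noteq> {})"

definition reached :: "(nat \<Rightarrow> 'a set set) \<Rightarrow> nat \<Rightarrow> 'a set" where
  "reached \<L> m = {p. \<exists>L. linked_chain \<L> m L \<and> p \<in> L m}"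

lemma reached_0 [simp]: "reached \<L> 0 = UNIV"
  unfolding reached_def linked_chain_def by (auto intro!: exI[of _ "\<lambda>_. {_}"])

lemma subset_reached_Suc:
  assumes l: "l \<in> \<L> (Suc m)" and meet: "l \<inter> reached \<L> m \<noteq> {}"
  shows "l \<subseteq> reached \<L> (Suc m)"
proof
  fix p assume "p \<in> l"
  from meet obtain L where L: "linked_chain \<L> m L" and "l \<inter> L m \<noteq> {}"
    unfolding reached_def by blast
  then have "linked_chain \<L> (Suc m) (L(Suc m := l))"
    using l unfolding linked_chain_def by (auto simp: le_Suc_eq Int_commute)
  with \<open>p \<in> l\<close> show "p \<in> reached \<L> (Suc m)"
    unfolding reached_def by (intro CollectI exI[of _ "L(Suc m := l)"]) simp
qed

lemma unreached_Suc_subset: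
  fixes d m :: nat and x :: "nat \<Rightarrow> nat \<Rightarrow> int" and \<L> :: "nat \<Rightarrow> (nat \<Rightarrow> int) set set"
  defines "s \<equiv> sdir d (Suc m)"
  defines "T \<equiv> {q. \<forall>r\<in>box d x m. r(s := 0) = q \<longrightarrow> r \<notin> reached \<L> m}"
  assumes s: "s \<in> {1..d}" and grow: "box d x m \<subseteq> box d x (Suc m)"
  shows "box d x (Suc m) - reached \<L> (Suc m)
    \<subseteq> {p \<in> box d x (Suc m). p(s := 0) \<in> T}
      \<union> {p \<in> box d x (Suc m). line_through d x (Suc m) p \<notin> \<L> (Suc m)}"
proof (rule subsetI, rule ccontr)
  fix p assume p: "p \<in> box d x (Suc m) - reached \<L> (Suc m)"
    and "p \<notin> {p \<in> box d x (Suc m). p(s := 0) \<in> T}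
      \<union> {p \<in> box d x (Suc m). line_through d x (Suc m) p \<notin> \<L> (Suc m)}"
  then have good: "line_through d x (Suc m) p \<in> \<L> (Suc m)"
    and "p(s := 0) \<notin> T" by auto
  then obtain r where r: "r \<in> box d x m" "r(s := 0) = p(s := 0)" "r \<in> reached \<L> m"
    unfolding T_def by blast
  have line: "line_through d x (Suc m) p = {r \<in> box d x (Suc m). r(s := 0) = p(s := 0)}"
    using line_through_eq_fibre[of d "Suc m" p x] s p unfolding s_def by blast
  with r grow have "line_through d x (Suc m) p \<inter> reached \<L> m \<noteq> {}" by blast
  with good have "line_through d x (Suc m) p \<subseteq> reached \<L> (Suc m)"
    by (rule subset_reached_Suc)
  moreover have "p \<in> line_through d x (Suc m) p" using line p by blast
  ultimately show False using p by blast
qed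

lemma card_unreached_Suc_le:
  fixes d m :: nat and x :: "nat \<Rightarrow> nat \<Rightarrow> int" and \<L> :: "nat \<Rightarrow> (nat \<Rightarrow> int) set set" and \<beta> :: real
  defines "s \<equiv> sdir d (Suc m)"
  assumes s: "s \<in> {1..d}" and same: "\<forall>k\<in>{1..d}. k \<noteq> s \<longrightarrow> x k (Suc m) = x k m"
    and grow: "x s m \<le> x s (Suc m)" and nonneg: "0 \<le> x s m"
    and unreached: "real (card (box d x m - reached \<L> m)) \<le> \<beta> * real (card (box d x m))"
  shows "real (card (box d x (Suc m) - reached \<L> (Suc m)))
    \<le> \<beta> * real (card (box d x (Suc m)))
      + real (card {p \<in> box d x (Suc m). line_through d x (Suc m) p \<notin> \<L> (Suc m)})"
proof -
  define T where "T = {q. \<forall>r\<in>box d x m. r(s := 0) = q \<longrightarrow> r \<notin> reached \<L> m}"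
  define B where "B = (\<lambda>p. p(s := 0)) ` box d x m"
  define U where "U = {p \<in> box d x (Suc m). line_through d x (Suc m) p \<notin> \<L> (Suc m)}"
  have B_Suc: "(\<lambda>p. p(s := 0)) ` box d x (Suc m) = B"
    unfolding B_def using proj_box_eq_if_same_off[OF s same nonneg] nonneg grow by simp
  have "real (card (T \<inter> B)) * real (nat (x s m + 1))
      = real (card {p \<in> box d x m. p(s := 0) \<in> T})"
    using card_box_proj_vimage[OF s, of x m T] by (simp add: B_def)
  also have "\<dots> \<le> real (card (box d x m - reached \<L> m))"
    by (intro of_nat_mono card_mono) (auto simp: finite_box T_def)
  also have "\<dots> \<le> \<beta> * real (card B) * real (nat (x s m + 1))"
    using unreached card_box[OF s, of x m] by (simp add: B_def)
  finally have TB: "real (card (T \<inter> B)) \<le> \<beta> * real (card B)"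
    using nonneg by simp
  have "box d x m \<subseteq> box d x (Suc m)"
    using same grow by (intro box_mono) (metis order_refl)
  then have "real (card (box d x (Suc m) - reached \<L> (Suc m)))
      \<le> real (card ({p \<in> box d x (Suc m). p(s := 0) \<in> T} \<union> U))"
    using unreached_Suc_subset[of d m x \<L>] s
    by (intro of_nat_mono card_mono) (auto simp: finite_box s_def T_def U_def)
  also have "\<dots> \<le> real (card (T \<inter> B) * nat (x s (Suc m) + 1) + card U)"
    using card_Un_le[of "{p \<in> box d x (Suc m). p(s := 0) \<in> T}" U]
      card_box_proj_vimage[OF s, of x "Suc m" T] B_Suc by (intro of_nat_mono) simp
  also have "\<dots> = real (card (T \<inter> B)) * real (nat (x s (Suc m) + 1)) + real (card U)"
    by simp
  also have "\<dots> \<le> \<beta> * real (card B) * real (nat (x s (Suc m) + 1)) + real (card U)"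
    using TB by (simp add: mult_right_mono)
  also have "\<dots> = \<beta> * real (card (box d x (Suc m))) + real (card U)"
    using card_box[OF s, of x "Suc m"] B_Suc by simp
  finally show ?thesis unfolding U_def .
qed

lemma card_unreached_le:
  fixes \<L> :: "nat \<Rightarrow> (nat \<Rightarrow> int) set set" and A :: "nat \<Rightarrow> real"
  assumes d: "d \<ge> 1" and x0: "\<forall>k\<in>{1..d}. x k 0 = 0"
    and step: "\<And>k m. k \<in> {1..d} \<Longrightarrow> x k m \<le> x k (Suc m)"
    and fixed: "\<And>k m. k \<in> {1..d} \<Longrightarrow> k \<noteq> sdir d (Suc m) \<Longrightarrow> x k (Suc m) = x k m"
    and Lsub: "\<forall>m\<ge>1. \<L> m \<subseteq> lines d x m"
    and Lcard: "\<forall>m\<ge>1. real (card (\<L> m)) \<ge> (1 - 1 / A m) * real (card (lines d x m))"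
  shows "real (card (box d x m - reached \<L> m)) \<le> (\<Sum>i=1..m. 1 / A i) * real (card (box d x m))"
proof (induction m)
  case (Suc m)
  have s: "sdir d (Suc m) \<in> {1..d}" by (rule sdir_mem[OF d])
  have nonneg: "0 \<le> x (sdir d (Suc m)) m"
    using x0 s lift_Suc_mono_le[of "x (sdir d (Suc m))" 0 m] step[OF s] by simp
  have "real (card (box d x (Suc m) - reached \<L> (Suc m)))
    \<le> (\<Sum>i=1..m. 1 / A i) * real (card (box d x (Suc m)))
      + real (card {p \<in> box d x (Suc m). line_through d x (Suc m) p \<notin> \<L> (Suc m)})"
    using fixed by (intro card_unreached_Suc_le[OF s _ step[OF s] nonneg Suc.IH]) blast
  also have "\<dots> \<le> (\<Sum>i=1..m. 1 / A i) * real (card (box d x (Suc m)))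
      + real (card (box d x (Suc m))) / A (Suc m)"
    using card_bad_lines_le[OF s Lsub[rule_format, of "Suc m"] Lcard[rule_format, of "Suc m"]]
    by simp
  also have "\<dots> = (\<Sum>i=1..Suc m. 1 / A i) * real (card (box d x (Suc m)))"
    by (simp add: distrib_right)
  finally show ?case .
qed simp

theorem lemma2p3:
  fixes d :: nat and x :: "nat \<Rightarrow> nat \<Rightarrow> int" and A :: "nat \<Rightarrow> real"
    and \<L> :: "nat \<Rightarrow> (nat \<Rightarrow> int) set set" and M0 :: nat
  assumes d2: "d \<ge> 2"
    and x0: "\<forall>k\<in>{1..d}. x k 0 = 0"
    and xmono: "\<forall>m\<ge>1. \<forall>k\<in>{1..d}. x k m \<ge> x k (m - 1)"
    and xstrict: "\<forall>m\<ge>1. \<forall>k\<in>{1..d}. (x k m > x k (m - 1) \<longleftrightarrow> k mod d = m mod d)"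
    and A1: "\<forall>m\<ge>1. A m > 1"
    and Lsub: "\<forall>m\<ge>1. \<L> m \<subseteq> lines d x m"
    and Lcard: "\<forall>m\<ge>1. real (card (\<L> m)) \<ge> (1 - 1 / A m) * real (card (lines d x m))"
    and sumA: "(\<Sum>m=1..M0. 1 / A m) < 1"
  shows "\<exists>L :: nat \<Rightarrow> (nat \<Rightarrow> int) set.
           (\<forall>m\<in>{1..M0}. L m \<in> \<L> m) \<and>
           (\<forall>m\<in>{1..M0 - 1}. L (m + 1) \<inter> L m \<noteq> {})"
proof -
  have d1: "d \<ge> 1" using d2 by simp
  have step: "x k m \<le> x k (Suc m)" if "k \<in> {1..d}" for k m
    using xmono[rule_format, of "Suc m" k] that by simp
  have fixed: "x k (Suc m) = x k m" if "k \<in> {1..d}" "k \<noteq> sdir d (Suc m)" for k m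
  proof -
    have "\<not> x k m < x k (Suc m)"
      using xstrict[rule_format, of "Suc m" k] that sdir_eq_iff_mod_eq[OF d1 that(1), of "Suc m"]
      by simp
    with step[OF that(1), of m] show ?thesis by simp
  qed
  note unreached = card_unreached_le[OF d1 x0 step fixed Lsub Lcard, of M0]
  have "0 \<le> x k M0" if "k \<in> {1..d}" for k
    using x0 that lift_Suc_mono_le[of "x k" 0 M0] step[OF that] by simp
  then have "(\<lambda>_. 0) \<in> box d x M0" by (auto simp: box_def)
  then have "0 < card (box d x M0)" using finite_box card_gt_0_iff by blast
  with sumA have "(\<Sum>i=1..M0. 1 / A i) * real (card (box d x M0)) < real (card (box d x M0))"
    by simp
  with unreached have "card (box d x M0 - reached \<L> M0) < card (box d x M0)" by linarith
  then have "reached \<L> M0 \<noteq> {}" by auto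
  then show ?thesis unfolding reached_def linked_chain_def by blast
qed

end
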